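(* Let $X$ be an uncountable, $\sigma$-compact, separable metric space. Then $C_p(X)$ is not countable dense homogeneous.
   Context: $C_p(X)$ is the space of continuous functions $X\to\mathbb{R}$ with the topology of pointwise convergence. A space $Y$ is countable dense homogeneous if $Y$ is separable and for any two countable dense subsets $D,E\subseteq Y$ there is a homeomorphism $h\colon Y\to Y$ with $h[D]=E$. *)

theory Defs
  imports "HOL-Analysis.Analysis"
begin

definition Cp :: "'a::topological_space topology \<Rightarrow> ('a \<Rightarrow> real) topology" where
  "Cp T = subtopology (powertop_real (topspace T)) {f. continuous_map T euclideanreal f}"

definition countable_dense_homogeneous :: "'b topology \<Rightarrow> bool" where
  "countable_dense_homogeneous Y \<longleftrightarrow>
     separable_space Y \<and>
     (\<forall>D E. countable D \<and> D \<subseteq> topspace Y \<and> Y closure_of D = topspace Y \<and>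
            countable E \<and> E \<subseteq> topspace Y \<and> Y closure_of E = topspace Y \<longrightarrow>
            (\<exists>h. homeomorphic_map Y Y h \<and> h ` D = E))"

definition sigma_compact_space :: "'a topology \<Rightarrow> bool" where
  "sigma_compact_space T \<longleftrightarrow>
     (\<exists>K :: nat \<Rightarrow> 'a set. (\<forall>n. compactin T (K n)) \<and> (\<Union>n. K n) = topspace T)"

end

theory Submission
  imports Defs
begin

text \<open>
  Since X is uncountable and \<sigma>-compact, some compact K \<subseteq> X is uncountable, and its condensation
  points carry a Cantor scheme: balls B(p s, r s) indexed by binary strings s, nested along
  extensions, with disjoint doubled balls on each level. For a level l and a set Z of at most l
  nodes of that level, let g(l,Z) be the sum of tent functions (1 on B(p s, r s), 0 off
  B(p s, 2 r s)) over the level-l nodes outside Z. A finite set of n points meets at most n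
  doubled balls of level n, so some g(n,Z) vanishes on it; hence adding large multiples of the
  g's to the members of a countable dense set of C_p(X) yields a countable dense set E.
  Conversely every infinite family of g's is \<ge> 1 at a common point of K, namely the end of a
  branch of the scheme avoiding all the Z's, so choosing the multiples distinct and unbounded
  forbids any injective sequence in E to converge. But E together with the constants 1/(k+1)
  is a countable dense set containing an injective convergent sequence, and a homeomorphism
  mapping it onto E would carry that sequence into E.
\<close>

lemma ball_subset_ball_dist: "dist c a + e \<le> d \<Longrightarrow> ball a e \<subseteq> ball c d"
  unfolding subset_iff mem_ball by metric

lemma cball_subset_cball_dist: "dist c a + e \<le> d \<Longrightarrow> cball a e \<subseteq> cball c d"
  unfolding subset_iff mem_cball by metric


section \<open>Condensation points\<close>

definition condensation_points :: "'a::metric_space set \<Rightarrow> 'a set" where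
  "condensation_points S = {x. \<forall>e>0. uncountable (S \<inter> ball x e)}"

lemma condensation_points_mono: "S \<subseteq> T \<Longrightarrow> condensation_points S \<subseteq> condensation_points T"
  unfolding condensation_points_def
  by (auto dest: countable_subset[where A = "S \<inter> ball _ _", rotated] simp: Int_mono)

lemma countable_diff_condensation_points:
  fixes S Q :: "'a::metric_space set"
  assumes Q: "countable Q" "S \<subseteq> closure Q"
  shows "countable (S - condensation_points S)"
proof -
  define B where "B = (\<lambda>(q, n::nat). let U = S \<inter> ball q (inverse (real (Suc n))) in
                                     if countable U then U else {})"
  have "S - condensation_points S \<subseteq> \<Union> (B ` (Q \<times> UNIV))"
  proof
    fix x assume x: "x \<in> S - condensation_points S"
    then obtain e where e: "e > 0" "countable (S \<inter> ball x e)"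
      by (auto simp: condensation_points_def)
    obtain m where m: "inverse (real (Suc m)) < e / 2"
      using reals_Archimedean[of "e / 2"] e by auto
    have "x \<in> closure Q" using Q x by blast
    then obtain q where q: "q \<in> Q" "dist q x < inverse (real (Suc m))"
      using closure_approachable[of x Q] by (metis inverse_positive_iff_positive of_nat_0_less_iff zero_less_Suc)
    have "ball q (inverse (real (Suc m))) \<subseteq> ball x e"
      using q(2) m by (intro ball_subset_ball_dist) (simp add: dist_commute)
    then have "countable (S \<inter> ball q (inverse (real (Suc m))))"
      using e countable_subset by (metis Int_mono subset_refl)
    then have "x \<in> B (q, m)" using x q by (simp add: B_def dist_commute)
    then show "x \<in> \<Union> (B ` (Q \<times> UNIV))" using q by blast
  qed
  moreover have "countable (\<Union> (B ` (Q \<times> UNIV)))"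
    by (rule countable_UN) (auto simp: B_def Let_def Q(1))
  ultimately show ?thesis using countable_subset by blast
qed

lemma uncountable_Int_condensation_points:
  fixes S Q :: "'a::metric_space set"
  assumes "countable Q" "S \<subseteq> closure Q" "uncountable S"
  shows "uncountable (S \<inter> condensation_points S)"
proof
  assume "countable (S \<inter> condensation_points S)"
  then have "countable ((S \<inter> condensation_points S) \<union> (S - condensation_points S))"
    using countable_diff_condensation_points[OF assms(1,2)] by simp
  then show False using assms(3) by (simp add: Int_Diff_Un)
qed

lemma condensation_point_split:
  fixes K Q :: "'a::metric_space set"
  assumes Q: "countable Q" "K \<subseteq> closure Q" and c: "c \<in> condensation_points K" and r: "r > 0"
  obtains a b r' where "a \<in> K \<inter> condensation_points K" "b \<in> K \<inter> condensation_points K" "r' > 0"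
    "cball a r' \<subseteq> cball c r" "cball b r' \<subseteq> cball c r"
    "ball a (2 * r') \<subseteq> ball c (2 * r)" "ball b (2 * r') \<subseteq> ball c (2 * r)"
    "ball a (2 * r') \<inter> ball b (2 * r') = {}"
proof -
  define U where "U = K \<inter> ball c (r / 2)"
  have "uncountable U" using c r by (auto simp: condensation_points_def U_def)
  then have "uncountable (U \<inter> condensation_points U)"
    using Q by (intro uncountable_Int_condensation_points[of Q]) (auto simp: U_def)
  then obtain a b where ab: "a \<in> U \<inter> condensation_points U" "b \<in> U \<inter> condensation_points U" "a \<noteq> b"
    by (metis countable_finite finite.simps insertI1 subsetI subset_singletonD)
  have "condensation_points U \<subseteq> condensation_points K"
    by (rule condensation_points_mono) (auto simp: U_def)
  then have in_K: "a \<in> K \<inter> condensation_points K" "b \<in> K \<inter> condensation_points K"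
    using ab by (auto simp: U_def)
  have near: "dist c a < r / 2" "dist c b < r / 2" using ab by (auto simp: U_def)
  define r' where "r' = min (r / 4) (dist a b / 4)"
  have r': "r' > 0" "r' \<le> r / 4" using ab r by (auto simp: r'_def)
  have "ball a (2 * r') \<inter> ball b (2 * r') = {}"
  proof (rule ccontr)
    assume "ball a (2 * r') \<inter> ball b (2 * r') \<noteq> {}"
    then obtain y where "dist a y < 2 * r'" "dist b y < 2 * r'" by auto
    then have "dist a b < 4 * r'" using dist_triangle[of a b y] by (simp add: dist_commute)
    then show False unfolding r'_def by linarith
  qed
  moreover have "cball a r' \<subseteq> cball c r" "cball b r' \<subseteq> cball c r"
    using near r' by (auto intro!: cball_subset_cball_dist)
  moreover have "ball a (2 * r') \<subseteq> ball c (2 * r)" "ball b (2 * r') \<subseteq> ball c (2 * r)"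
    using near r' by (auto intro!: ball_subset_ball_dist)
  ultimately show thesis using that in_K r'(1) by blast
qed


section \<open>Cantor schemes\<close>

text \<open>Nodes are binary strings whose children are \<open>b # s\<close>, so extensions are prepended.\<close>

locale cantor_scheme =
  fixes K :: "'a::metric_space set" and p :: "bool list \<Rightarrow> 'a" and r :: "bool list \<Rightarrow> real"
  assumes compact: "compact K" and centre_in: "p s \<in> K" and radius_pos: "r s > 0"
    and cball_child_subset: "cball (p (b # s)) (r (b # s)) \<subseteq> cball (p s) (r s)"
    and ball2_child_subset: "ball (p (b # s)) (2 * r (b # s)) \<subseteq> ball (p s) (2 * r s)"
    and ball2_children_disjoint:
      "ball (p (True # s)) (2 * r (True # s)) \<inter> ball (p (False # s)) (2 * r (False # s)) = {}"

lemma uncountable_compact_imp_cantor_scheme: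
  fixes K Q :: "'a::metric_space set"
  assumes K: "compact K" "uncountable K" and Q: "countable Q" "K \<subseteq> closure Q"
  obtains p r where "cantor_scheme K p r"
proof -
  define good where "good c \<rho> \<longleftrightarrow> c \<in> K \<inter> condensation_points K \<and> \<rho> > 0" for c and \<rho> :: real
  have "\<exists>a b \<rho>'. good a \<rho>' \<and> good b \<rho>' \<and> cball a \<rho>' \<subseteq> cball c \<rho> \<and> cball b \<rho>' \<subseteq> cball c \<rho> \<and>
          ball a (2 * \<rho>') \<subseteq> ball c (2 * \<rho>) \<and> ball b (2 * \<rho>') \<subseteq> ball c (2 * \<rho>) \<and>
          ball a (2 * \<rho>') \<inter> ball b (2 * \<rho>') = {}" if "good c \<rho>" for c \<rho>
    using that condensation_point_split[OF Q, of c \<rho>] unfolding good_def by (metis IntD2)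
  then obtain A B R where split: "\<And>c \<rho>. good c \<rho> \<Longrightarrow>
      good (A c \<rho>) (R c \<rho>) \<and> good (B c \<rho>) (R c \<rho>) \<and>
      cball (A c \<rho>) (R c \<rho>) \<subseteq> cball c \<rho> \<and> cball (B c \<rho>) (R c \<rho>) \<subseteq> cball c \<rho> \<and>
      ball (A c \<rho>) (2 * R c \<rho>) \<subseteq> ball c (2 * \<rho>) \<and> ball (B c \<rho>) (2 * R c \<rho>) \<subseteq> ball c (2 * \<rho>) \<and>
      ball (A c \<rho>) (2 * R c \<rho>) \<inter> ball (B c \<rho>) (2 * R c \<rho>) = {}"
    by metis
  obtain c0 where "c0 \<in> K \<inter> condensation_points K"
    using uncountable_Int_condensation_points[OF Q K(2)] by (metis countable_empty equals0I)
  then have root: "good c0 1" by (simp add: good_def)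
  define node where "node s = foldr (\<lambda>b (c, \<rho>). (if b then A c \<rho> else B c \<rho>, R c \<rho>)) s (c0, 1)" for s
  have node_Cons: "node (b # s) = (if b then A (fst (node s)) (snd (node s)) else B (fst (node s)) (snd (node s)),
                                   R (fst (node s)) (snd (node s)))" for b s
    by (simp add: node_def split_beta)
  have good_node: "good (fst (node s)) (snd (node s))" for s
  proof (induction s)
    case Nil
    show ?case using root by (simp add: node_def)
  next
    case (Cons b s)
    show ?case using split[OF Cons.IH] by (simp add: node_Cons)
  qed
  have "cantor_scheme K (\<lambda>s. fst (node s)) (\<lambda>s. snd (node s))"
  proof
    fix s b
    show "fst (node s) \<in> K" "0 < snd (node s)" using good_node[of s] by (auto simp: good_def)
    show "cball (fst (node (b # s))) (snd (node (b # s))) \<subseteq> cball (fst (node s)) (snd (node s))"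
      "ball (fst (node (b # s))) (2 * snd (node (b # s))) \<subseteq> ball (fst (node s)) (2 * snd (node s))"
      "ball (fst (node (True # s))) (2 * snd (node (True # s))) \<inter>
       ball (fst (node (False # s))) (2 * snd (node (False # s))) = {}"
      using split[OF good_node[of s]] by (auto simp: node_Cons)
  qed (fact K(1))
  then show thesis by (rule that)
qed

lemma sigma_compact_uncountable_imp_uncountable_compactin:
  assumes "sigma_compact_space T" "uncountable (topspace T)"
  obtains K where "compactin T K" "uncountable K"
proof -
  obtain C :: "nat \<Rightarrow> 'a set" where C: "\<And>n. compactin T (C n)" "(\<Union>n. C n) = topspace T"
    using assms(1) by (auto simp: sigma_compact_space_def)
  have "\<exists>n. uncountable (C n)"
  proof (rule ccontr)
    assume "\<not> ?thesis"
    then have "countable (\<Union>n. C n)" by auto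
    then show False using C(2) assms(2) by simp
  qed
  then show thesis using C(1) that by blast
qed


section \<open>Combinatorics of the levels\<close>

definition level :: "nat \<Rightarrow> bool list set" where
  "level l = {s. length s = l}"

text \<open>
  The bound \<open>card Z \<le> l\<close> is what is needed to avoid n points with a level-n family, and it
  leaves room, for long enough l, to extend every given node outside Z.
\<close>

definition admissible :: "(nat \<times> bool list set) set" where
  "admissible = {(l, Z). Z \<subseteq> level l \<and> card Z \<le> l}"

lemma finite_level: "finite (level l)"
  unfolding level_def using finite_lists_length_eq[of "UNIV :: bool set" l] by simp

lemma countable_admissible: "countable admissible"
proof -
  have "admissible \<subseteq> UNIV \<times> Collect finite"
    unfolding admissible_def using finite_level finite_subset by auto
  moreover have "countable ((UNIV :: nat set) \<times> (Collect finite :: bool list set set))"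
    using countable_Collect_finite by (intro countable_SIGMA) auto
  ultimately show ?thesis using countable_subset by blast
qed

lemma double_less_power_two: "m \<ge> 3 \<Longrightarrow> 2 * m < (2::nat) ^ m"
  by (induction m rule: nat_induct_at_least) simp_all

lemma obtain_extension_notin:
  assumes Z: "Z \<subseteq> level l" "card Z < 2 ^ (l - length s)" and s: "length s \<le> l"
  obtains t where "length (t @ s) = l" "t @ s \<notin> Z"
proof -
  have "card ((\<lambda>t. t @ s) ` {t :: bool list. length t = l - length s}) = 2 ^ (l - length s)"
    using card_lists_length_eq[of "UNIV :: bool set" "l - length s"]
    by (subst card_image) (auto simp: inj_on_def)
  moreover have "finite Z" using Z(1) finite_level by (rule finite_subset)
  ultimately have "\<not> (\<lambda>t. t @ s) ` {t. length t = l - length s} \<subseteq> Z"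
    using Z(2) card_mono[of Z] by (metis leD)
  then obtain t where "length t = l - length s" "t @ s \<notin> Z" by blast
  then show thesis using s by (intro that[of t]) auto
qed

lemma admissible_extension:
  assumes "J \<subseteq> admissible" "infinite J"
  obtains t j where "j \<in> J" "length (t @ s) > length s" "fst j = length (t @ s)" "t @ s \<notin> snd j"
proof -
  define N where "N = 2 * length s + 3"
  have "{j\<in>admissible. fst j < N} \<subseteq> (\<Union>l<N. {l} \<times> Pow (level l))"
    by (auto simp: admissible_def)
  then have "finite {j\<in>admissible. fst j < N}"
    by (rule finite_subset) (auto simp: finite_level)
  then have "\<not> J \<subseteq> {j\<in>admissible. fst j < N}" using assms finite_subset by blast
  then obtain l Z where lZ: "(l, Z) \<in> J" "l \<ge> N" using assms(1) by force
  then have Z: "Z \<subseteq> level l" "card Z \<le> l" using assms(1) by (auto simp: admissible_def)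
  have "2 * (l - length s) < 2 ^ (l - length s)"
    by (rule double_less_power_two) (use lZ in \<open>simp add: N_def\<close>)
  then have "card Z < 2 ^ (l - length s)" using Z(2) lZ(2) by (simp add: N_def)
  moreover have "length s \<le> l" using lZ(2) by (simp add: N_def)
  ultimately obtain t where "length (t @ s) = l" "t @ s \<notin> Z"
    by (rule obtain_extension_notin[OF Z(1)])
  then show thesis using that[of "(l, Z)" t] lZ by (auto simp: N_def)
qed


section \<open>Tent functions along a Cantor scheme\<close>

context cantor_scheme
begin

definition tent :: "bool list \<Rightarrow> 'a \<Rightarrow> real" where
  "tent s x = max 0 (min 1 (2 - dist x (p s) / r s))"

definition tent_sum :: "nat \<times> bool list set \<Rightarrow> 'a \<Rightarrow> real" where
  "tent_sum j x = (\<Sum>s \<in> level (fst j) - snd j. tent s x)"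

lemma tent_nonneg: "tent s x \<ge> 0"
  by (simp add: tent_def)

lemma tent_eq_1: "x \<in> cball (p s) (r s) \<Longrightarrow> tent s x = 1"
  using radius_pos[of s] by (simp add: tent_def dist_commute field_simps)

lemma tent_eq_0:
  assumes "x \<notin> ball (p s) (2 * r s)"
  shows "tent s x = 0"
proof -
  have "2 \<le> dist x (p s) / r s"
    using assms radius_pos[of s] by (simp add: dist_commute le_divide_eq)
  then show ?thesis by (simp add: tent_def)
qed

lemma continuous_on_tent: "continuous_on UNIV (tent s)"
  unfolding tent_def [abs_def] by (intro continuous_intros) (use radius_pos[of s] in simp)

lemma continuous_on_tent_sum: "continuous_on UNIV (tent_sum j)"
  unfolding tent_sum_def [abs_def] by (intro continuous_on_sum continuous_on_tent)

lemma tent_le_tent_sum: "s \<in> level (fst j) - snd j \<Longrightarrow> tent s x \<le> tent_sum j x"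
  unfolding tent_sum_def by (rule member_le_sum) (auto simp: tent_nonneg finite_level)

lemma cball_append_subset: "cball (p (t @ s)) (r (t @ s)) \<subseteq> cball (p s) (r s)"
  by (induction t) (simp, metis append_Cons cball_child_subset order_trans)

lemma ball2_level_disjoint:
  "length s = length s' \<Longrightarrow> s \<noteq> s' \<Longrightarrow> ball (p s) (2 * r s) \<inter> ball (p s') (2 * r s') = {}"
proof (induction s s' rule: list_induct2)
  case (Cons b s b' s')
  show ?case
  proof (cases "s = s'")
    case True
    then show ?thesis
      using Cons ball2_children_disjoint[of s'] by (cases b; cases b') (auto simp: Int_commute)
  next
    case False
    then show ?thesis using Cons ball2_child_subset[of b s] ball2_child_subset[of b' s'] by blast
  qed
qed simp

lemma tent_sum_vanishes_on_finite:
  assumes "finite F"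
  obtains j where "j \<in> admissible" "\<And>x. x \<in> F \<Longrightarrow> tent_sum j x = 0"
proof -
  define l where "l = card F"
  define Z where "Z = {s \<in> level l. \<exists>x\<in>F. x \<in> ball (p s) (2 * r s)}"
  have "\<forall>s\<in>Z. \<exists>x. x \<in> F \<and> x \<in> ball (p s) (2 * r s)" by (auto simp: Z_def)
  from bchoice[OF this] obtain f where f: "\<forall>s\<in>Z. f s \<in> F \<and> f s \<in> ball (p s) (2 * r s)" ..
  have "inj_on f Z"
  proof (rule inj_onI)
    fix s s' assume s: "s \<in> Z" "s' \<in> Z" and eq: "f s = f s'"
    then have "f s \<in> ball (p s) (2 * r s) \<inter> ball (p s') (2 * r s')" using f by auto
    moreover have "length s = length s'" using s by (simp add: Z_def level_def)
    ultimately show "s = s'" using ball2_level_disjoint by blast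
  qed
  then have "card Z \<le> l"
    unfolding l_def using f assms by (intro card_inj_on_le) auto
  then have "(l, Z) \<in> admissible" by (auto simp: admissible_def Z_def)
  moreover have "tent_sum (l, Z) x = 0" if "x \<in> F" for x
    unfolding tent_sum_def by (rule sum.neutral) (use that in \<open>auto simp: Z_def intro!: tent_eq_0\<close>)
  ultimately show thesis by (rule that)
qed

lemma tent_sum_ge_1_somewhere:
  assumes "j \<in> admissible"
  obtains x where "x \<in> K" "1 \<le> tent_sum j x"
proof -
  obtain l Z where j: "j = (l, Z)" "Z \<subseteq> level l" "card Z \<le> l"
    using assms by (auto simp: admissible_def)
  have "card Z < 2 ^ (l - length [])" using j(3) less_exp[of l] by (simp del: less_exp)
  then obtain t where t: "length (t @ []) = l" "t @ [] \<notin> Z"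
    by (rule obtain_extension_notin[OF j(2)]) simp
  have "tent t (p t) \<le> tent_sum j (p t)"
    using t j by (intro tent_le_tent_sum) (auto simp: level_def)
  moreover have "tent t (p t) = 1" by (rule tent_eq_1) (use radius_pos[of t] in auto)
  ultimately show thesis using centre_in that by force
qed

lemma branch_common_point:
  assumes "\<And>i. \<exists>t. \<beta> (Suc i) = t @ \<beta> i"
  shows "\<exists>x\<in>K. \<forall>i. x \<in> cball (p (\<beta> i)) (r (\<beta> i))"
proof -
  define C where "C i = K \<inter> cball (p (\<beta> i)) (r (\<beta> i))" for i
  have "(\<Inter>i. C i) \<noteq> {}"
  proof (rule compact_space_imp_nest[of "top_of_set K"])
    show "compact_space (top_of_set K)" using compact by (simp add: compact_space_subtopology)
    show "closedin (top_of_set K) (C i)" for i unfolding C_def by (intro closedin_closed_Int) simp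
    show "C i \<noteq> {}" for i
      using centre_in[of "\<beta> i"] radius_pos[of "\<beta> i"] by (auto simp: C_def)
    have "C (Suc i) \<subseteq> C i" for i
    proof -
      obtain t where "\<beta> (Suc i) = t @ \<beta> i" using assms by blast
      then show ?thesis using cball_append_subset[of t "\<beta> i"] unfolding C_def by auto
    qed
    then show "decseq C" by (rule decseq_SucI)
  qed
  then obtain x where "\<And>i. x \<in> C i" by blast
  then show ?thesis unfolding C_def by blast
qed

text \<open>
  The witness is the point of K on a branch s_0, s_1, ... chosen so that s_{i+1} is a node of
  some level of J extending s_i and omitted by the corresponding member of J.
\<close>

lemma infinite_family_tent_sum_ge_1:
  assumes J: "J \<subseteq> admissible" "infinite J"
  obtains x where "x \<in> K" "infinite {j\<in>J. 1 \<le> tent_sum j x}"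
proof -
  have "\<exists>s' j. j \<in> J \<and> (\<exists>t. s' = t @ s) \<and> length s' > length s \<and> fst j = length s' \<and> s' \<notin> snd j"
    for s by (rule admissible_extension[OF J, of s]) blast
  then obtain nxt jj where nj: "\<And>s. jj s \<in> J \<and> (\<exists>t. nxt s = t @ s) \<and> length (nxt s) > length s
      \<and> fst (jj s) = length (nxt s) \<and> nxt s \<notin> snd (jj s)"
    by metis
  define branch where "branch i = (nxt ^^ i) []" for i
  have branch_Suc: "branch (Suc i) = nxt (branch i)" for i by (simp add: branch_def)
  have "\<exists>t. branch (Suc i) = t @ branch i" for i using nj by (simp add: branch_Suc)
  then obtain x where x: "x \<in> K" "\<forall>i. x \<in> cball (p (branch i)) (r (branch i))"
    using branch_common_point by blast
  have ge: "1 \<le> tent_sum (jj (branch i)) x" for i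
  proof -
    have "tent (branch (Suc i)) x = 1" by (rule tent_eq_1) (use x in blast)
    moreover have "tent (branch (Suc i)) x \<le> tent_sum (jj (branch i)) x"
      by (rule tent_le_tent_sum) (use nj[of "branch i"] in \<open>simp add: branch_Suc level_def\<close>)
    ultimately show ?thesis by simp
  qed
  have "strict_mono (\<lambda>i. fst (jj (branch i)))"
    by (rule strict_monoI_Suc) (use nj in \<open>simp add: branch_Suc\<close>)
  then have "inj (\<lambda>i. jj (branch i))" unfolding inj_def using strict_mono_eq by metis
  then have "infinite (range (\<lambda>i. jj (branch i)))" by (rule range_inj_infinite)
  moreover have "range (\<lambda>i. jj (branch i)) \<subseteq> {j\<in>J. 1 \<le> tent_sum j x}" using nj ge by auto
  ultimately show thesis using that x(1) finite_subset by blast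
qed

lemma tent_sum_ge_1_infinitely_often:
  fixes J :: "nat \<Rightarrow> nat \<times> bool list set"
  assumes "range J \<subseteq> admissible"
  obtains x where "x \<in> K" "infinite {k. 1 \<le> tent_sum (J k) x}"
proof (cases "finite (range J)")
  case True
  then obtain k0 where k0: "infinite {k. J k = J k0}"
    using pigeonhole_infinite[of "UNIV :: nat set" J] by auto
  obtain x where x: "x \<in> K" "1 \<le> tent_sum (J k0) x"
    using tent_sum_ge_1_somewhere assms by blast
  have "{k. J k = J k0} \<subseteq> {k. 1 \<le> tent_sum (J k) x}" using x by auto
  then show thesis using that x k0 finite_subset by blast
next
  case False
  then obtain x where x: "x \<in> K" "infinite {j\<in>range J. 1 \<le> tent_sum j x}"
    using infinite_family_tent_sum_ge_1 assms by blast
  have "{j\<in>range J. 1 \<le> tent_sum j x} \<subseteq> J ` {k. 1 \<le> tent_sum (J k) x}" by auto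
  then show thesis using that x finite_subset by blast
qed

end


section \<open>The space \<open>C\<^sub>p\<close>\<close>

lemma topspace_Cp: "topspace (Cp (euclidean :: 'a::topological_space topology)) = {f. continuous_on UNIV f}"
  by (simp add: Cp_def continuous_map_iff_continuous2)

lemma limitin_Cp_imp_pointwise:
  assumes "limitin (Cp (euclidean :: 'a::topological_space topology)) s l F"
  shows "((\<lambda>k. s k x) \<longlongrightarrow> l x) F"
  using assms unfolding Cp_def limitin_subtopology limitin_componentwise limitin_canonical_iff
  by simp

lemma limitin_Cp_const:
  assumes "c \<longlonglongrightarrow> c0"
  shows "limitin (Cp (euclidean :: 'a::topological_space topology)) (\<lambda>k x. c k) (\<lambda>x. c0) sequentially"
  unfolding Cp_def limitin_subtopology limitin_componentwise limitin_canonical_iff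
  using assms by (simp add: continuous_map_iff_continuous2)

lemma openin_Cp_finite_agreement:
  fixes U :: "('a::topological_space \<Rightarrow> real) set"
  assumes "openin (Cp euclidean) U" "d \<in> U"
  obtains F where "finite F" "\<And>y. continuous_on UNIV y \<Longrightarrow> (\<forall>x\<in>F. y x = d x) \<Longrightarrow> y \<in> U"
proof -
  obtain V where V: "openin (powertop_real UNIV) V" "U = V \<inter> {f. continuous_map euclidean euclideanreal f}"
    using assms(1) by (auto simp: Cp_def openin_subtopology)
  then obtain W where W: "finite {x. W x \<noteq> UNIV}" "d \<in> Pi\<^sub>E UNIV W" "Pi\<^sub>E UNIV W \<subseteq> V"
    using assms(2) unfolding openin_product_topology_alt by force
  show thesis
  proof (rule that[OF W(1)])
    fix y :: "'a \<Rightarrow> real" assume y: "continuous_on UNIV y" "\<forall>x\<in>{x. W x \<noteq> UNIV}. y x = d x"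
    have "y \<in> Pi\<^sub>E UNIV W"
      using y(2) W(2) by (auto simp: PiE_iff) (metis UNIV_I)
    then show "y \<in> U" using W(3) V(2) y(1) by (auto simp: continuous_map_iff_continuous2)
  qed
qed

lemma range_subset_image_lift:
  assumes "range s \<subseteq> f ` A" "inj s"
  obtains q where "range q \<subseteq> A" "inj q" "s = f \<circ> q"
proof -
  have "\<forall>k. \<exists>a. a \<in> A \<and> s k = f a" using assms(1) by blast
  from choice[OF this] obtain q where q: "\<forall>k. q k \<in> A \<and> s k = f (q k)" ..
  then have "s = f \<circ> q" by auto
  moreover have "inj q" using assms(2) calculation by (intro inj_on_imageI2[of f]) simp
  ultimately show thesis using q that by blast
qed

lemma countable_dense_homogeneous_transfer_sequence:
  assumes cdh: "countable_dense_homogeneous Y"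
    and D: "countable D" "D \<subseteq> topspace Y" "Y closure_of D = topspace Y"
    and E: "countable E" "E \<subseteq> topspace Y" "Y closure_of E = topspace Y"
    and s: "range s \<subseteq> D" "inj s" "limitin Y s l sequentially"
  obtains s' l' where "range s' \<subseteq> E" "inj s'" "limitin Y s' l' sequentially"
proof -
  obtain h where h: "homeomorphic_map Y Y h" "h ` D = E"
    using cdh D E unfolding countable_dense_homogeneous_def by blast
  show thesis
  proof
    show "range (h \<circ> s) \<subseteq> E" using h(2) s(1) by auto
    show "inj (h \<circ> s)"
      using homeomorphic_imp_injective_map[OF h(1)] s(1,2) D(2)
      by (intro comp_inj_on) (auto intro: inj_on_subset)
    show "limitin Y (h \<circ> s) (h l) sequentially"
      by (rule continuous_map_limit[OF homeomorphic_imp_continuous_map[OF h(1)] s(3)])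
  qed
qed


section \<open>A countable dense subset of \<open>C\<^sub>p\<close> without convergent sequences\<close>

context cantor_scheme
begin

lemma Cp_closure_of_tent_perturbations:
  fixes D0 :: "('a \<Rightarrow> real) set"
  assumes D0: "D0 \<subseteq> topspace (Cp euclidean)" "Cp euclidean closure_of D0 = topspace (Cp euclidean)"
  shows "Cp euclidean closure_of ((\<lambda>(d, j) x. d x + c (d, j) * tent_sum j x) ` (D0 \<times> admissible))
         = topspace (Cp euclidean)"
    (is "_ closure_of ?E = _")
proof
  show "Cp euclidean closure_of ?E \<subseteq> topspace (Cp euclidean)" by (rule closure_of_subset_topspace)
  show "topspace (Cp euclidean) \<subseteq> Cp euclidean closure_of ?E"
  proof
    fix f :: "'a \<Rightarrow> real" assume f: "f \<in> topspace (Cp euclidean)"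
    show "f \<in> Cp euclidean closure_of ?E"
      unfolding in_closure_of
    proof (intro conjI allI impI)
      show "f \<in> topspace (Cp euclidean)" by (fact f)
      fix U :: "('a \<Rightarrow> real) set" assume U: "f \<in> U \<and> openin (Cp euclidean) U"
      have "f \<in> Cp euclidean closure_of D0" using D0(2) f by simp
      then obtain d where d: "d \<in> D0" "d \<in> U" using U unfolding in_closure_of by blast
      obtain F where F: "finite F" "\<And>y. continuous_on UNIV y \<Longrightarrow> (\<forall>x\<in>F. y x = d x) \<Longrightarrow> y \<in> U"
        using openin_Cp_finite_agreement[of U d] U d(2) by blast
      obtain j where j: "j \<in> admissible" "\<And>x. x \<in> F \<Longrightarrow> tent_sum j x = 0"
        using tent_sum_vanishes_on_finite[OF F(1)] by blast
      have "continuous_on UNIV d" using D0(1) d(1) topspace_Cp by blast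
      then have "(\<lambda>x. d x + c (d, j) * tent_sum j x) \<in> U"
        using j by (intro F(2)) (auto intro!: continuous_intros continuous_on_tent_sum)
      then show "\<exists>y. y \<in> ?E \<and> y \<in> U" using d(1) j(1) by blast
    qed
  qed
qed

text \<open>
  On the point x of K where infinitely many tent sums are \<ge> 1, the corresponding terms exceed
  distinct natural numbers and so are unbounded, whereas a convergent sequence is bounded at x.
\<close>

lemma not_limitin_Cp_tent_perturbations:
  fixes D0 :: "('a \<Rightarrow> real) set"
  assumes ix: "inj_on ix (D0 \<times> admissible)"
    and c: "\<And>d j x. d \<in> D0 \<Longrightarrow> j \<in> admissible \<Longrightarrow> x \<in> K \<Longrightarrow> \<bar>d x\<bar> + real (ix (d, j)) \<le> c (d, j)"
    and q: "range q \<subseteq> D0 \<times> admissible" "inj q"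
  shows "\<not> limitin (Cp euclidean) ((\<lambda>(d, j) x. d x + c (d, j) * tent_sum j x) \<circ> q) l sequentially"
    (is "\<not> limitin _ ?s _ _")
proof
  assume lim: "limitin (Cp euclidean) ?s l sequentially"
  have inj_ix_q: "inj (ix \<circ> q)"
    using ix q by (intro comp_inj_on) (auto intro: inj_on_subset)
  have "range (snd \<circ> q) \<subseteq> admissible" using q(1) by (auto simp: mem_Times_iff)
  then obtain x where x: "x \<in> K" and A: "infinite {k. 1 \<le> tent_sum ((snd \<circ> q) k) x}"
    by (rule tent_sum_ge_1_infinitely_often)
  have "Bseq (\<lambda>k. ?s k x)"
    using limitin_Cp_imp_pointwise[OF lim] by (intro convergent_imp_Bseq) (auto simp: convergent_def)
  then obtain B where B: "\<And>k. \<bar>?s k x\<bar> \<le> B" unfolding Bseq_def by auto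
  have low: "real (ix (q k)) \<le> ?s k x" if "1 \<le> tent_sum ((snd \<circ> q) k) x" for k
  proof -
    obtain d j where dj: "q k = (d, j)" "d \<in> D0" "j \<in> admissible" using q(1) by blast
    have "c (d, j) \<le> c (d, j) * tent_sum j x"
      using c[OF dj(2,3) x] that dj(1) by (intro mult_le_cancel_left1 [THEN iffD2]) auto
    then show ?thesis using c[OF dj(2,3) x] dj(1) by simp
  qed
  have "infinite ((ix \<circ> q) ` {k. 1 \<le> tent_sum ((snd \<circ> q) k) x})"
    using A finite_image_iff[OF inj_on_subset[OF inj_ix_q subset_UNIV]] by blast
  then obtain k where k: "1 \<le> tent_sum ((snd \<circ> q) k) x" "ix (q k) > nat \<lceil>B\<rceil>"
    unfolding infinite_nat_iff_unbounded by auto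
  then show False using low[OF k(1)] B[of k] by linarith
qed

lemma Cp_dense_without_convergent_sequences:
  fixes D0 :: "('a \<Rightarrow> real) set"
  assumes D0: "countable D0" "D0 \<subseteq> topspace (Cp euclidean)" "Cp euclidean closure_of D0 = topspace (Cp euclidean)"
  obtains E :: "('a \<Rightarrow> real) set" where "countable E" "E \<subseteq> topspace (Cp euclidean)" "Cp euclidean closure_of E = topspace (Cp euclidean)"
    "\<And>s l. range s \<subseteq> E \<Longrightarrow> inj s \<Longrightarrow> \<not> limitin (Cp euclidean) s l sequentially"
proof -
  have "\<exists>M. \<forall>x\<in>K. \<bar>d x\<bar> \<le> M" if "d \<in> D0" for d
  proof -
    have "compact (d ` K)"
      using compact D0(2) that topspace_Cp by (auto intro: compact_continuous_image continuous_on_subset)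
    then obtain B where "\<forall>y\<in>d ` K. norm y \<le> B" using compact_imp_bounded bounded_iff by metis
    then show ?thesis by auto
  qed
  then obtain M where M: "\<And>d x. d \<in> D0 \<Longrightarrow> x \<in> K \<Longrightarrow> \<bar>d x\<bar> \<le> M d" by metis
  define ix where "ix = to_nat_on (D0 \<times> admissible)"
  have ix: "inj_on ix (D0 \<times> admissible)"
    unfolding ix_def by (rule inj_on_to_nat_on) (simp add: D0(1) countable_admissible)
  define c where "c = (\<lambda>(d, j). M d + real (ix (d, j)))"
  define E where "E = (\<lambda>(d, j) x. d x + c (d, j) * tent_sum j x) ` (D0 \<times> admissible)"
  show thesis
  proof (rule that[of E])
    show "countable E" unfolding E_def by (simp add: D0(1) countable_admissible)
    show "E \<subseteq> topspace (Cp euclidean)"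
      using D0(2) unfolding E_def topspace_Cp
      by (auto intro!: continuous_intros continuous_on_tent_sum)
    show "Cp euclidean closure_of E = topspace (Cp euclidean)"
      unfolding E_def by (rule Cp_closure_of_tent_perturbations[OF D0(2,3)])
    have c: "\<bar>d x\<bar> + real (ix (d, j)) \<le> c (d, j)" if "d \<in> D0" "x \<in> K" for d j x
      using M[OF that] by (simp add: c_def)
    show "\<not> limitin (Cp euclidean) s l sequentially" if s: "range s \<subseteq> E" "inj s" for s l
    proof -
      obtain q where q: "range q \<subseteq> D0 \<times> admissible" "inj q"
        and "s = (\<lambda>(d, j) x. d x + c (d, j) * tent_sum j x) \<circ> q"
        using s unfolding E_def by (rule range_subset_image_lift)
      then show ?thesis using not_limitin_Cp_tent_perturbations[OF ix c q] by simp
    qed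
  qed
qed

end


theorem mainTheorem3:
  assumes "uncountable (UNIV :: 'a::metric_space set)"
    and "sigma_compact_space (euclidean :: 'a topology)"
    and "separable_space (euclidean :: 'a topology)"
  shows "\<not> countable_dense_homogeneous (Cp (euclidean :: 'a topology))"
proof
  let ?T = "Cp (euclidean :: 'a topology)"
  assume cdh: "countable_dense_homogeneous ?T"
  obtain K :: "'a set" where K: "compact K" "uncountable K"
    using sigma_compact_uncountable_imp_uncountable_compactin[OF assms(2)] assms(1) by auto
  obtain Q :: "'a set" where Q: "countable Q" "closure Q = UNIV"
    using assms(3) by (auto simp: separable_space_def)
  obtain p r where "cantor_scheme K p r"
    using uncountable_compact_imp_cantor_scheme[OF K Q(1)] Q(2) by auto
  then interpret cantor_scheme K p r .
  obtain D0 where D0: "countable D0" "D0 \<subseteq> topspace ?T" "?T closure_of D0 = topspace ?T"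
    using cdh by (auto simp: countable_dense_homogeneous_def separable_space_def)
  obtain E where E: "countable E" "E \<subseteq> topspace ?T" "?T closure_of E = topspace ?T"
    and no_seq: "\<And>s l. range s \<subseteq> E \<Longrightarrow> inj s \<Longrightarrow> \<not> limitin ?T s l sequentially"
    using Cp_dense_without_convergent_sequences[OF D0] by blast
  define s where "s k = (\<lambda>x::'a. inverse (real (Suc k)))" for k
  have s_lim: "limitin ?T s (\<lambda>x. 0) sequentially"
    unfolding s_def by (rule limitin_Cp_const[OF LIMSEQ_inverse_real_of_nat])
  have s_inj: "inj s" by (rule injI) (simp add: s_def fun_eq_iff)
  have "range s \<subseteq> topspace ?T" by (auto simp: s_def topspace_Cp)
  then have D: "countable (E \<union> range s)" "E \<union> range s \<subseteq> topspace ?T"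
    using E(1,2) by auto
  have D_dense: "?T closure_of (E \<union> range s) = topspace ?T"
    by (simp add: closure_of_Un E(3) Un_absorb2 closure_of_subset_topspace)
  obtain s' l' where "range s' \<subseteq> E" "inj s'" "limitin ?T s' l' sequentially"
    by (rule countable_dense_homogeneous_transfer_sequence[OF cdh D D_dense E _ s_inj s_lim]) simp
  with no_seq show False by blast
qed

end
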